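(* For $x_b,x_\theta\in\mathbb{R}$ let $$F(x_b,x_\theta)=\int_{\mathbb{R}}\frac{e^{(y+x_\theta)x_b}-e^{-(y+x_\theta)x_b}}{e^{(y+x_\theta)x_b}+e^{-(y+x_\theta)x_b}}\,(y+x_\theta)\,\phi(y)\,dy.$$ Then for each fixed $x_\theta$, $x_b\mapsto F(x_b,x_\theta)$ is concave on $x_b\ge0$; moreover (i) $F(0,x_\theta)=0$ and (ii) $F(x_\theta,x_\theta)=x_\theta$.
   Context: $\phi$ is the standard normal density. *)

theory Defs
  imports "HOL-Probability.Probability"
begin

definition F :: "real \<Rightarrow> real \<Rightarrow> real" where
  "F xb x\<theta> = (\<integral>y. ((exp ((y + x\<theta>) * xb) - exp (- ((y + x\<theta>) * xb))) /
                       (exp ((y + x\<theta>) * xb) + exp (- ((y + x\<theta>) * xb))))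
                    * (y + x\<theta>) * std_normal_density y \<partial>lborel)"

end

theory Submission
  imports Defs
begin

text \<open>
  For every \<open>w\<close> the map
  \<open>b \<mapsto> w tanh (w b)\<close> is concave on \<open>b \<ge> 0\<close>, because its derivative
  \<open>w\<^sup>2 (1 - tanh\<^sup>2 (w b))\<close> decreases there, and integrating against \<open>\<phi> \<ge> 0\<close> preserves
  concavity. For \<open>F a a = a\<close>, the reflection \<open>y \<mapsto> -y - 2a\<close> fixes \<open>(y + a) tanh ((y + a) a)\<close>
  and turns \<open>\<phi>(y)\<close> into \<open>\<phi>(y + 2a) = \<phi>(y) exp (-2 (y + a) a)\<close>. Adding the two forms of the
  integral and using \<open>tanh t (1 + exp (-2t)) = 1 - exp (-2t)\<close> gives
  \<open>2 F a a = \<integral> (y + a) \<phi>(y) dy - \<integral> (y + a) \<phi>(y + 2a) dy = a - (-a)\<close>.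
\<close>

lemma F_eq_tanh_integral:
  "F b a = (\<integral>y. tanh ((y + a) * b) * (y + a) * std_normal_density y \<partial>lborel)"
  by (simp add: F_def tanh_altdef)

lemma concave_on_integral:
  fixes f :: "'a::real_vector \<Rightarrow> 'b \<Rightarrow> real"
  assumes "convex C"
    and concave: "\<And>y. concave_on C (\<lambda>x. f x y)"
    and integrable: "\<And>x. x \<in> C \<Longrightarrow> integrable M (f x)"
  shows "concave_on C (\<lambda>x. \<integral>y. f x y \<partial>M)"
  unfolding concave_on_iff
proof (intro conjI ballI allI impI \<open>convex C\<close>)
  fix x z and u v :: real assume xz: "x \<in> C" "z \<in> C" and uv: "0 \<le> u" "0 \<le> v" "u + v = 1"
  then have "u *\<^sub>R x + v *\<^sub>R z \<in> C"
    using \<open>convex C\<close> by (simp add: convex_def)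
  have "u * (\<integral>y. f x y \<partial>M) + v * (\<integral>y. f z y \<partial>M) = (\<integral>y. u * f x y + v * f z y \<partial>M)"
    using integrable xz by simp
  also have "\<dots> \<le> (\<integral>y. f (u *\<^sub>R x + v *\<^sub>R z) y \<partial>M)"
    using integrable xz uv \<open>u *\<^sub>R x + v *\<^sub>R z \<in> C\<close> concave
    by (intro integral_mono) (auto simp: concave_on_iff)
  finally show "u * (\<integral>y. f x y \<partial>M) + v * (\<integral>y. f z y \<partial>M) \<le> (\<integral>y. f (u *\<^sub>R x + v *\<^sub>R z) y \<partial>M)" .
qed

lemma concave_on_tanh_scaled: "concave_on {0..} (\<lambda>b. tanh (w * b) * w)"
  unfolding concave_on_def
proof (rule convex_on_realI[where f' = "\<lambda>b. - (w * w * (1 - tanh (w * b) ^ 2))"])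
  show "connected {0::real..}" by simp
  fix b :: real
  show "((\<lambda>b. - (tanh (w * b) * w)) has_real_derivative - (w * w * (1 - tanh (w * b) ^ 2))) (at b)"
    by (auto intro!: derivative_eq_intros
        simp: cosh_real_pos[THEN less_imp_neq, symmetric] algebra_simps)
next
  fix b c :: real assume "b \<in> {0..}" "c \<in> {0..}" "b \<le> c"
  then have "\<bar>w * b\<bar> \<le> \<bar>w * c\<bar>" by (simp add: abs_mult mult_left_mono)
  then have "\<bar>tanh (w * b)\<bar> \<le> \<bar>tanh (w * c)\<bar>" by (metis tanh_real_abs tanh_real_le_iff)
  then have "tanh (w * b)^2 \<le> tanh (w * c)^2"
    by (metis abs_le_square_iff)
  then show "- (w * w * (1 - tanh (w * b) ^ 2)) \<le> - (w * w * (1 - tanh (w * c) ^ 2))"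
    by (simp add: mult_left_mono)
qed

lemma integrable_shifted_std_normal: "integrable lborel (\<lambda>y. (y + a) * std_normal_density y)"
proof -
  have "integrable lborel (\<lambda>y. std_normal_density y * y ^ 1 + a * std_normal_density y)"
    using integrable_std_normal_moment[of 1] integrable_normal_density[of 1 0]
    by (intro Bochner_Integration.integrable_add integrable_mult_right) auto
  then show ?thesis by (simp add: algebra_simps)
qed

lemma integral_shifted_std_normal: "(\<integral>y. (y + a) * std_normal_density y \<partial>lborel) = a"
proof -
  have "(\<integral>y. (y + a) * std_normal_density y \<partial>lborel)
      = (\<integral>y. std_normal_density y * y ^ (2*0+1) + a * std_normal_density y \<partial>lborel)"
    by (rule Bochner_Integration.integral_cong) (auto simp: algebra_simps)
  also have "\<dots> = (\<integral>y. std_normal_density y * y ^ (2*0+1) \<partial>lborel)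
                 + (\<integral>y. a * std_normal_density y \<partial>lborel)"
    using integrable_std_normal_moment[of 1] integrable_normal_density[of 1 0]
    by (intro Bochner_Integration.integral_add integrable_mult_right) auto
  also have "\<dots> = a"
    using integral_std_normal_moment_odd[of 0] integral_normal_density[of 1 0] by simp
  finally show ?thesis .
qed

lemma integrable_tanh_shifted_std_normal:
  "integrable lborel (\<lambda>y. tanh ((y + a) * b) * (y + a) * std_normal_density y)"
proof (rule Bochner_Integration.integrable_bound[OF integrable_shifted_std_normal[of a]])
  show "(\<lambda>y. tanh ((y + a) * b) * (y + a) * std_normal_density y) \<in> borel_measurable lborel"
    unfolding tanh_altdef by measurable
  have "\<bar>tanh ((y + a) * b)\<bar> * \<bar>(y + a) * std_normal_density y\<bar> \<le> \<bar>(y + a) * std_normal_density y\<bar>"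
    for y
    using tanh_real_bounds[of "(y + a) * b"] by (intro mult_left_le_one_le) auto
  then show "AE y in lborel. norm (tanh ((y + a) * b) * (y + a) * std_normal_density y)
      \<le> norm ((y + a) * std_normal_density y)"
    by (intro AE_I2) (simp add: abs_mult mult.assoc)
qed

lemma concave_on_F: "concave_on {0..} (\<lambda>b. F b a)"
  unfolding F_eq_tanh_integral
proof (rule concave_on_integral)
  fix y
  have "concave_on {0..} (\<lambda>b. std_normal_density y * (tanh ((y + a) * b) * (y + a)))"
    using concave_on_tanh_scaled by (intro concave_on_cmul) (auto simp: normal_density_nonneg)
  then show "concave_on {0..} (\<lambda>b. tanh ((y + a) * b) * (y + a) * std_normal_density y)"
    by (simp add: mult_ac)
qed (auto intro: integrable_tanh_shifted_std_normal)

lemma std_normal_density_shift: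
  "std_normal_density (y + 2 * a) = std_normal_density y * exp (- 2 * ((y + a) * a))"
proof -
  have "- (y + 2 * a)\<^sup>2 / 2 = - y\<^sup>2 / 2 + (- 2 * ((y + a) * a))"
    by (simp add: power2_eq_square field_simps)
  then have "exp (- (y + 2 * a)\<^sup>2 / 2) = exp (- y\<^sup>2 / 2) * exp (- 2 * ((y + a) * a))"
    by (simp only: exp_add)
  then show ?thesis
    by (simp add: std_normal_density_def)
qed

lemma std_normal_density_minus: "std_normal_density (- y) = std_normal_density y"
  by (simp add: std_normal_density_def)

lemma tanh_mult_one_plus_exp: "tanh (t::real) * (1 + exp (- 2 * t)) = 1 - exp (- 2 * t)"
proof -
  have "1 + exp (- 2 * t) > 0" by (simp add: add_pos_pos)
  then show ?thesis by (simp add: tanh_real_altdef)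
qed

lemma tanh_shifted_std_normal_reflect_sum:
  "tanh ((y + a) * a) * (y + a) * std_normal_density y
   + tanh ((y + a) * a) * (y + a) * std_normal_density (y + 2 * a)
   = (y + a) * std_normal_density y - (y + a) * std_normal_density (y + 2 * a)"
proof -
  have "tanh ((y + a) * a) * (y + a) * std_normal_density y
      + tanh ((y + a) * a) * (y + a) * std_normal_density (y + 2 * a)
      = (tanh ((y + a) * a) * (1 + exp (- 2 * ((y + a) * a)))) * (y + a) * std_normal_density y"
    unfolding std_normal_density_shift by (simp add: algebra_simps)
  also have "\<dots> = (1 - exp (- 2 * ((y + a) * a))) * (y + a) * std_normal_density y"
    by (simp only: tanh_mult_one_plus_exp)
  also have "\<dots> = (y + a) * std_normal_density y - (y + a) * std_normal_density (y + 2 * a)"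
    unfolding std_normal_density_shift by (simp add: algebra_simps)
  finally show ?thesis .
qed

lemma F_diagonal: "F a a = a"
proof -
  define G where "G y = tanh ((y + a) * a) * (y + a) * std_normal_density y" for y
  define H where "H y = tanh ((y + a) * a) * (y + a) * std_normal_density (y + 2 * a)" for y
  define K where "K y = (y + a) * std_normal_density (y + 2 * a)" for y
  have G_integrable: "integrable lborel G"
    unfolding G_def by (rule integrable_tanh_shifted_std_normal)
  have G_reflect: "G (- 2 * a + (-1) * y) = H y" for y
  proof -
    have "- 2 * a + (-1) * y = - (y + 2 * a)" "- (y + 2 * a) + a = - (y + a)" by simp_all
    then show ?thesis
      unfolding G_def H_def
      by (simp only: std_normal_density_minus mult_minus_left tanh_minus minus_mult_minus)
  qed
  have H_integrable: "integrable lborel H"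
    using lborel_integrable_real_affine[OF G_integrable, of "-1" "- 2 * a"] G_reflect by simp
  have "integral\<^sup>L lborel G = integral\<^sup>L lborel H"
    using lborel_integral_real_affine[of "-1" G "- 2 * a"] G_reflect by simp
  have K_shift: "K (- 2 * a + 1 * y) = (y + (- a)) * std_normal_density y" for y
    unfolding K_def by (simp add: algebra_simps)
  have K_integrable: "integrable lborel K"
    using lborel_integrable_real_affine_iff[of 1 K "- 2 * a"] K_shift
      integrable_shifted_std_normal[of "-a"] by simp
  have K_integral: "integral\<^sup>L lborel K = - a"
    using lborel_integral_real_affine[of 1 K "- 2 * a"] K_shift
      integral_shifted_std_normal[of "-a"] by simp
  have "2 * F a a = integral\<^sup>L lborel G + integral\<^sup>L lborel H"
    using \<open>integral\<^sup>L lborel G = integral\<^sup>L lborel H\<close>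
    by (simp add: F_eq_tanh_integral G_def[abs_def])
  also have "\<dots> = (\<integral>y. G y + H y \<partial>lborel)"
    using G_integrable H_integrable by simp
  also have "\<dots> = (\<integral>y. (y + a) * std_normal_density y - K y \<partial>lborel)"
    unfolding G_def H_def K_def by (simp only: tanh_shifted_std_normal_reflect_sum)
  also have "\<dots> = (\<integral>y. (y + a) * std_normal_density y \<partial>lborel) - integral\<^sup>L lborel K"
    using integrable_shifted_std_normal K_integrable by simp
  also have "\<dots> = 2 * a"
    using integral_shifted_std_normal K_integral by simp
  finally show ?thesis by simp
qed

theorem lemma19:
  fixes x\<theta> :: real
  shows "concave_on {0..} (\<lambda>xb. F xb x\<theta>) \<and> F 0 x\<theta> = 0 \<and> F x\<theta> x\<theta> = x\<theta>"
  using concave_on_F[of x\<theta>] F_diagonal[of x\<theta>] by (simp add: F_eq_tanh_integral)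

end
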